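(* Let $t$ be a positive integer, let $\mathbb{F}_{2^t}=\{\alpha_1,\ldots,\alpha_{2^t}\}$ be the finite field of order $2^t$, fix a group isomorphism $(\mathbb{F}_{2^t},+)\cong\mathbb{Z}_2^t$, and define $\phi:\mathbb{F}_{2^t}\to GL_{2^t}(\mathbb{R})$ by $\phi(x)=r^{x_1}\otimes\cdots\otimes r^{x_t}$ where $(x_1,\ldots,x_t)\in\mathbb{Z}_2^t$ is the image of $x$ and $r=\begin{pmatrix}0&1\\1&0\end{pmatrix}$. Let $W=(w_{kl})_{k,l=1}^{2^t}$ be a Hadamard matrix of order $2^t$, and for $i\in\{1,\ldots,2^t\}$ let $W_i$ be the $2^{2t}\times2^{2t}$ block matrix whose $(k,l)$-block is $w_{kl}\phi(\alpha_i\alpha_l)$. Then for any distinct $i,j\in\{1,\ldots,2^t\}$, $W_iW_j^\top$ is a Bush-type Hadamard matrix of order $2^{2t}$.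
   Context: A Hadamard matrix of order $n$ is an $n\times n$ $(1,-1)$-matrix $H$ with $HH^\top=nI_n$. A Hadamard matrix $H$ of order $n^2$ is of Bush-type if, partitioned into $n\times n$ blocks $H=(H_{ij})_{i,j=1}^n$, it satisfies $H_{ii}=J_n$ for all $i$ and $H_{ij}J_n=J_nH_{ij}=O_n$ for all $i\neq j$, where $J_n$ is the all-ones and $O_n$ the zero $n\times n$ matrix. *)

theory Defs
  imports "Jordan_Normal_Form.Matrix"
begin

definition kron_mat :: "'a::times mat \<Rightarrow> 'a mat \<Rightarrow> 'a mat" where
  "kron_mat A B = mat (dim_row A * dim_row B) (dim_col A * dim_col B)
     (\<lambda>(i, j). A $$ (i div dim_row B, j div dim_col B) * B $$ (i mod dim_row B, j mod dim_col B))"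

definition r_mat :: "real mat" where
  "r_mat = mat 2 2 (\<lambda>(i, j). if i = j then 0 else 1)"

definition J_mat :: "nat \<Rightarrow> real mat" where
  "J_mat n = mat n n (\<lambda>_. 1)"

definition hadamard :: "nat \<Rightarrow> real mat \<Rightarrow> bool" where
  "hadamard n H \<longleftrightarrow> H \<in> carrier_mat n n
     \<and> (\<forall>i<n. \<forall>j<n. H $$ (i, j) = 1 \<or> H $$ (i, j) = -1)
     \<and> H * transpose_mat H = of_nat n \<cdot>\<^sub>m 1\<^sub>m n"

definition block_of :: "nat \<Rightarrow> 'a mat \<Rightarrow> nat \<Rightarrow> nat \<Rightarrow> 'a mat" where
  "block_of n H i j = mat n n (\<lambda>(a, b). H $$ (i * n + a, j * n + b))"

definition bush_type :: "nat \<Rightarrow> real mat \<Rightarrow> bool" where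
  "bush_type n H \<longleftrightarrow> hadamard (n^2) H
     \<and> (\<forall>i<n. block_of n H i i = J_mat n)
     \<and> (\<forall>i<n. \<forall>j<n. i \<noteq> j \<longrightarrow>
          block_of n H i j * J_mat n = 0\<^sub>m n n \<and> J_mat n * block_of n H i j = 0\<^sub>m n n)"

text \<open>Elements of Z_2^t are represented as bit vectors v :: nat \<Rightarrow> bool
  with v k = False for k \<ge> t (coordinates x_1..x_t are v 0 .. v (t-1)),
  with addition given by pointwise exclusive or.\<close>
definition Z2_pow :: "nat \<Rightarrow> (nat \<Rightarrow> bool) set" where
  "Z2_pow t = {v. \<forall>k\<ge>t. \<not> v k}"

definition additive_iso_Z2 :: "nat \<Rightarrow> ('a::ab_group_add \<Rightarrow> nat \<Rightarrow> bool) \<Rightarrow> bool" where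
  "additive_iso_Z2 t \<iota> \<longleftrightarrow> bij_betw \<iota> UNIV (Z2_pow t)
     \<and> (\<forall>x y. \<iota> (x + y) = (\<lambda>k. \<iota> x k \<noteq> \<iota> y k))"

definition phi :: "nat \<Rightarrow> ('a \<Rightarrow> nat \<Rightarrow> bool) \<Rightarrow> 'a \<Rightarrow> real mat" where
  "phi t \<iota> x = foldr kron_mat (map (\<lambda>k. r_mat ^\<^sub>m (if \<iota> x k then 1 else 0)) [0..<t]) (1\<^sub>m 1)"

definition W_blk :: "nat \<Rightarrow> ('a::field \<Rightarrow> nat \<Rightarrow> bool) \<Rightarrow> (nat \<Rightarrow> 'a) \<Rightarrow> real mat \<Rightarrow> nat \<Rightarrow> real mat" where
  "W_blk t \<iota> \<alpha> W i = mat (2^t * 2^t) (2^t * 2^t)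
     (\<lambda>(a, b). W $$ (a div 2^t, b div 2^t) *
               phi t \<iota> (\<alpha> i * \<alpha> (b div 2^t)) $$ (a mod 2^t, b mod 2^t))"

end

theory Submission
  imports Defs "Jordan_Normal_Form.Determinant"
begin

text \<open>In characteristic 2, \<open>\<phi>(x)\<close> is the permutation matrix of translation by \<open>x\<close>: after
  numbering its rows and columns by field elements \<open>\<delta>\<^sub>a\<close>, its \<open>(a, c)\<close> entry is
  \<open>[\<delta>\<^sub>a + \<delta>\<^sub>c = x]\<close>. Hence entry \<open>(a, b)\<close> of the \<open>(k, m)\<close> block of \<open>W\<^sub>i W\<^sub>j\<^sup>T\<close> is
  \<open>\<Sum>\<^sub>l w\<^sub>k\<^sub>l w\<^sub>m\<^sub>l [\<delta>\<^sub>a + \<delta>\<^sub>b = (\<alpha>\<^sub>i + \<alpha>\<^sub>j) \<alpha>\<^sub>l]\<close>, and since \<open>\<alpha>\<^sub>i \<noteq> \<alpha>\<^sub>j\<close> exactly one \<open>l = L(a, b)\<close>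
  contributes: the entry is \<open>w\<^sub>k\<^sub>L w\<^sub>m\<^sub>L\<close> for a symmetric Latin square \<open>L\<close>. Every such matrix
  is of Bush type: its diagonal blocks have entries \<open>w\<^sub>k\<^sub>L\<^sup>2 = 1\<close>, the rows of an
  off-diagonal block sum to \<open>\<Sum>\<^sub>l w\<^sub>k\<^sub>l w\<^sub>m\<^sub>l = 0\<close>, and the orthogonality of its rows follows
  from that of both the rows and the columns of \<open>W\<close>.\<close>

lemma sum_lessThan_mult_split:
  fixes g :: "nat \<Rightarrow> 'b::comm_monoid_add"
  shows "(\<Sum>p<n*k. g p) = (\<Sum>m<n. \<Sum>c<k. g (m*k + c))"
proof -
  have "(\<Sum>p<n*k. g p) = (\<Sum>m<n. sum g {m*k..<m*k + k})"
    by (rule sum.nat_group[symmetric])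
  also have "\<dots> = (\<Sum>m<n. \<Sum>c<k. g (m*k + c))"
  proof (rule sum.cong[OF refl])
    fix m
    show "sum g {m*k..<m*k + k} = (\<Sum>c<k. g (m*k + c))"
      using sum.shift_bounds_nat_ivl[of g 0 "m*k" k] by (simp add: atLeast0LessThan add.commute)
  qed
  finally show ?thesis .
qed

lemma block_index_less:
  fixes k a n :: nat
  assumes "k < n" "a < n"
  shows "k*n + a < n*n"
proof -
  have "k*n + a < (k + 1)*n" using assms by simp
  also have "\<dots> \<le> n*n" using assms by (intro mult_le_mono1) simp
  finally show ?thesis .
qed

lemma block_index_cases:
  fixes q n :: nat
  assumes "q < n*n"
  obtains k a where "q = k*n + a" "k < n" "a < n"
proof
  show "q = q div n * n + q mod n" by simp
  show "q div n < n" using assms by (simp add: less_mult_imp_div_less)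
  show "q mod n < n" using assms by (cases "n = 0") simp_all
qed

lemma block_index_eq_iff:
  fixes k a m b n :: nat
  assumes "a < n" "b < n"
  shows "k*n + a = m*n + b \<longleftrightarrow> k = m \<and> a = b"
proof
  assume "k*n + a = m*n + b"
  hence "(k*n + a) div n = (m*n + b) div n" "(k*n + a) mod n = (m*n + b) mod n" by simp_all
  thus "k = m \<and> a = b" using assms by simp
qed simp

lemma index_mult_mat_sum:
  fixes A B :: "'b::comm_ring_1 mat"
  assumes "A \<in> carrier_mat r s" "B \<in> carrier_mat s u" "i < r" "j < u"
  shows "(A * B) $$ (i, j) = (\<Sum>l<s. A $$ (i, l) * B $$ (l, j))"
  using assms by (simp add: scalar_prod_def atLeast0LessThan)

lemma index_mult_transpose_block:
  fixes A B :: "'b::comm_ring_1 mat"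
  assumes "A \<in> carrier_mat p (n*n)" "B \<in> carrier_mat q (n*n)" "r < p" "s < q"
  shows "(A * transpose_mat B) $$ (r, s) = (\<Sum>l<n. \<Sum>c<n. A $$ (r, l*n + c) * B $$ (s, l*n + c))"
proof -
  have "(A * transpose_mat B) $$ (r, s) = (\<Sum>q<n*n. A $$ (r, q) * B $$ (s, q))"
    using assms by (subst index_mult_mat_sum[of _ p "n*n" _ q]) auto
  thus ?thesis by (simp add: sum_lessThan_mult_split)
qed

lemma hadamard_rows_orthogonal:
  assumes "hadamard n W" "k < n" "m < n"
  shows "(\<Sum>l<n. W $$ (k, l) * W $$ (m, l)) = (if k = m then real n else 0)"
proof -
  have W: "W \<in> carrier_mat n n" "W * transpose_mat W = of_nat n \<cdot>\<^sub>m 1\<^sub>m n"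
    using assms(1) by (auto simp: hadamard_def)
  have "(W * transpose_mat W) $$ (k, m) = (\<Sum>l<n. W $$ (k, l) * W $$ (m, l))"
    using W assms by (subst index_mult_mat_sum[of _ n n _ n]) auto
  thus ?thesis using W assms by auto
qed

text \<open>A square matrix with a right inverse has it as a left inverse, so \<open>W\<^sup>T W = n I\<close> too.\<close>
lemma hadamard_columns_orthogonal:
  assumes "hadamard n W" "l < n" "l' < n"
  shows "(\<Sum>k<n. W $$ (k, l) * W $$ (k, l')) = (if l = l' then real n else 0)"
proof -
  have W: "W \<in> carrier_mat n n" "W * transpose_mat W = of_nat n \<cdot>\<^sub>m 1\<^sub>m n"
    using assms(1) by (auto simp: hadamard_def)
  have n: "n > 0" using assms(2) by simp
  define V where "V = (1 / real n) \<cdot>\<^sub>m transpose_mat W"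
  have V: "V \<in> carrier_mat n n" using W by (simp add: V_def)
  have "W * V = 1\<^sub>m n"
    using W n by (simp add: V_def mult_smult_distrib[of _ n n _ n]) (rule eq_matI, auto)
  hence VW: "V * W = 1\<^sub>m n" by (rule mat_mult_left_right_inverse[OF W(1) V])
  have "(V * W) $$ (l, l') = (1 / real n) * (\<Sum>k<n. W $$ (k, l) * W $$ (k, l'))"
    using W V assms by (subst index_mult_mat_sum[of _ n n _ n]) (auto simp: V_def sum_distrib_left)
  thus ?thesis using VW assms n by (auto simp: field_simps split: if_splits)
qed

locale latin_hadamard_block_matrix =
  fixes n :: nat and W H :: "real mat" and L :: "nat \<Rightarrow> nat \<Rightarrow> nat"
  assumes hadamard_W: "hadamard n W"
    and bij_L_row: "\<And>a. a < n \<Longrightarrow> bij_betw (L a) {..<n} {..<n}"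
    and L_commute: "\<And>a b. a < n \<Longrightarrow> b < n \<Longrightarrow> L a b = L b a"
    and H_carrier: "H \<in> carrier_mat (n*n) (n*n)"
    and H_index: "\<And>k m a b. k < n \<Longrightarrow> m < n \<Longrightarrow> a < n \<Longrightarrow> b < n \<Longrightarrow>
      H $$ (k*n + a, m*n + b) = W $$ (k, L a b) * W $$ (m, L a b)"
begin

lemma L_less: "a < n \<Longrightarrow> b < n \<Longrightarrow> L a b < n"
  using bij_L_row by (auto dest: bij_betwE)

lemma L_inj_left:
  assumes "a < n" "b < n" "c < n" "L a c = L b c"
  shows "a = b"
  using assms L_commute bij_L_row[of c] by (auto simp: bij_betw_def inj_on_def)

lemma sum_L_row: "a < n \<Longrightarrow> (\<Sum>c<n. f (L a c)) = (\<Sum>l<n. f l)"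
  using sum.reindex_bij_betw[OF bij_L_row, of a f] by simp

lemma W_entry_pm: "k < n \<Longrightarrow> l < n \<Longrightarrow> W $$ (k, l) = 1 \<or> W $$ (k, l) = -1"
  using hadamard_W by (simp add: hadamard_def)

lemma W_entry_sq: "k < n \<Longrightarrow> l < n \<Longrightarrow> W $$ (k, l) * W $$ (k, l) = 1"
  using W_entry_pm[of k l] by auto

lemma H_entry_pm:
  assumes "q < n*n" "q' < n*n"
  shows "H $$ (q, q') = 1 \<or> H $$ (q, q') = -1"
proof -
  obtain k a m b where "q = k*n + a" "q' = m*n + b" "k < n" "a < n" "m < n" "b < n"
    using assms by (elim block_index_cases)
  thus ?thesis
    using H_index[of k m a b] W_entry_pm[of k "L a b"] W_entry_pm[of m "L a b"] L_less[of a b] by auto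
qed

text \<open>The inner sum over the block column index picks out \<open>W\<^sup>T W\<close>; by the Latin
  property only \<open>a = b\<close> survives, and then \<open>c \<mapsto> L a c\<close> reindexes the outer sum to \<open>W W\<^sup>T\<close>.\<close>
lemma gram_H_index:
  assumes "k < n" "a < n" "m < n" "b < n"
  shows "(H * transpose_mat H) $$ (k*n + a, m*n + b) = (if k = m \<and> a = b then real n ^ 2 else 0)"
proof -
  have "(H * transpose_mat H) $$ (k*n + a, m*n + b)
      = (\<Sum>p<n. \<Sum>c<n. H $$ (k*n + a, p*n + c) * H $$ (m*n + b, p*n + c))"
    using H_carrier assms block_index_less by (intro index_mult_transpose_block) auto
  also have "\<dots> = (\<Sum>p<n. \<Sum>c<n. W $$ (k, L a c) * W $$ (m, L b c) * (W $$ (p, L a c) * W $$ (p, L b c)))"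
    using assms by (intro sum.cong refl) (simp add: H_index mult_ac)
  also have "\<dots> = (\<Sum>c<n. W $$ (k, L a c) * W $$ (m, L b c) * (\<Sum>p<n. W $$ (p, L a c) * W $$ (p, L b c)))"
    by (subst sum.swap) (simp only: sum_distrib_left)
  also have "\<dots> = (\<Sum>c<n. W $$ (k, L a c) * W $$ (m, L b c) * (if a = b then real n else 0))"
  proof (intro sum.cong refl)
    fix c assume "c \<in> {..<n}"
    hence "L a c < n" "L b c < n" "L a c = L b c \<longleftrightarrow> a = b"
      using assms L_less L_inj_left[of a b c] by auto
    thus "W $$ (k, L a c) * W $$ (m, L b c) * (\<Sum>p<n. W $$ (p, L a c) * W $$ (p, L b c))
        = W $$ (k, L a c) * W $$ (m, L b c) * (if a = b then real n else 0)"
      by (simp add: hadamard_columns_orthogonal[OF hadamard_W])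
  qed
  also have "\<dots> = (if k = m \<and> a = b then real n ^ 2 else 0)"
  proof (cases "a = b")
    case True
    have "(\<Sum>c<n. W $$ (k, L a c) * W $$ (m, L a c)) = (if k = m then real n else 0)"
      using assms sum_L_row[of a "\<lambda>l. W $$ (k, l) * W $$ (m, l)"]
      by (simp add: hadamard_rows_orthogonal[OF hadamard_W])
    thus ?thesis using True by (simp add: power2_eq_square flip: sum_distrib_right)
  qed simp
  finally show ?thesis .
qed

lemma block_of_H: "k < n \<Longrightarrow> m < n \<Longrightarrow>
    block_of n H k m = mat n n (\<lambda>(a, b). W $$ (k, L a b) * W $$ (m, L a b))"
  by (auto simp: block_of_def H_index)

lemma bush_type_H: "bush_type n H"
  unfolding bush_type_def hadamard_def
proof (intro conjI allI impI)
  show "H \<in> carrier_mat (n^2) (n^2)" using H_carrier by (simp add: power2_eq_square)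
  show "H $$ (q, q') = 1 \<or> H $$ (q, q') = -1" if "q < n^2" "q' < n^2" for q q'
    using that H_entry_pm by (simp add: power2_eq_square)
  show "H * transpose_mat H = of_nat (n^2) \<cdot>\<^sub>m 1\<^sub>m (n^2)"
  proof (rule eq_matI)
    fix q q' assume "q < dim_row (of_nat (n^2) \<cdot>\<^sub>m 1\<^sub>m (n^2) :: real mat)"
      "q' < dim_col (of_nat (n^2) \<cdot>\<^sub>m 1\<^sub>m (n^2) :: real mat)"
    then obtain k a m b where "q = k*n + a" "q' = m*n + b" "k < n" "a < n" "m < n" "b < n"
      by (auto simp: power2_eq_square elim!: block_index_cases)
    thus "(H * transpose_mat H) $$ (q, q') = (of_nat (n^2) \<cdot>\<^sub>m 1\<^sub>m (n^2)) $$ (q, q')"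
      using gram_H_index block_index_eq_iff block_index_less by (auto simp: power2_eq_square)
  qed (use H_carrier in \<open>auto simp: power2_eq_square\<close>)
  show "block_of n H k k = J_mat n" if "k < n" for k
    using that W_entry_sq L_less by (intro eq_matI) (auto simp: block_of_H J_mat_def)
  fix k m assume km: "k < n" "m < n" "k \<noteq> m"
  have row_sum: "(\<Sum>c<n. W $$ (k, L a c) * W $$ (m, L a c)) = 0" if "a < n" for a
    using that km sum_L_row[of a "\<lambda>l. W $$ (k, l) * W $$ (m, l)"]
    by (simp add: hadamard_rows_orthogonal[OF hadamard_W])
  show "block_of n H k m * J_mat n = 0\<^sub>m n n"
    using km row_sum by (intro eq_matI) (auto simp: block_of_H J_mat_def scalar_prod_def atLeast0LessThan)
  show "J_mat n * block_of n H k m = 0\<^sub>m n n"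
    using km row_sum L_commute
    by (intro eq_matI) (auto simp: block_of_H J_mat_def scalar_prod_def atLeast0LessThan)
qed

end

lemma kron_mat_carrier:
  "A \<in> carrier_mat m n \<Longrightarrow> B \<in> carrier_mat p q \<Longrightarrow> kron_mat A B \<in> carrier_mat (m*p) (n*q)"
  by (simp add: kron_mat_def)

lemma index_kron_mat:
  assumes "i < dim_row A * dim_row B" "j < dim_col A * dim_col B"
  shows "kron_mat A B $$ (i, j) =
    A $$ (i div dim_row B, j div dim_col B) * B $$ (i mod dim_row B, j mod dim_col B)"
  using assms by (simp add: kron_mat_def)

definition r_pow :: "bool \<Rightarrow> real mat" where
  "r_pow b = r_mat ^\<^sub>m (if b then 1 else 0)"

definition kron_r_pows :: "bool list \<Rightarrow> real mat" where
  "kron_r_pows bs = foldr kron_mat (map r_pow bs) (1\<^sub>m 1)"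

lemma phi_eq_kron_r_pows: "phi t \<iota> x = kron_r_pows (map (\<iota> x) [0..<t])"
  by (simp add: phi_def kron_r_pows_def r_pow_def comp_def)

lemma r_pow_carrier: "r_pow b \<in> carrier_mat 2 2"
  by (cases b) (auto simp: r_pow_def r_mat_def)

lemma index_r_pow: "i < 2 \<Longrightarrow> j < 2 \<Longrightarrow> r_pow b $$ (i, j) = (if (i \<noteq> j) = b then 1 else 0)"
  by (cases b) (auto simp: r_pow_def r_mat_def)

lemma kron_r_pows_carrier: "kron_r_pows bs \<in> carrier_mat (2 ^ length bs) (2 ^ length bs)"
  by (induction bs) (auto simp: kron_r_pows_def intro!: kron_mat_carrier[OF r_pow_carrier, simplified])

lemma div_two_power_eq_bit:
  fixes a :: nat
  assumes "a < 2 * 2^m"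
  shows "a div 2^m = (if bit a m then 1 else 0)"
proof -
  have "a div 2^m < 2" using assms by (simp add: less_mult_imp_div_less mult.commute)
  hence "a div 2^m = 0 \<or> a div 2^m = 1" by linarith
  thus ?thesis by (auto simp: bit_iff_odd)
qed

text \<open>The first Kronecker factor acts on the most significant binary digit.\<close>
lemma index_kron_r_pows:
  assumes "a < 2 ^ length bs" "b < 2 ^ length bs"
  shows "kron_r_pows bs $$ (a, b) =
    (if \<forall>k<length bs. (bit a (length bs - 1 - k) \<noteq> bit b (length bs - 1 - k)) = bs ! k then 1 else 0)"
  using assms
proof (induction bs arbitrary: a b)
  case Nil
  thus ?case by (simp add: kron_r_pows_def)
next
  case (Cons x bs)
  define m where "m = length bs"
  have ab: "a < 2 * 2^m" "b < 2 * 2^m" using Cons.prems by (simp_all add: m_def)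
  have low_bits: "bit (c mod 2^m) (m - 1 - k) = bit c (m - 1 - k)" if "k < m" for c :: nat and k
    using that by (simp flip: take_bit_eq_mod add: bit_take_bit_iff)
  have "kron_r_pows (x # bs) $$ (a, b) = r_pow x $$ (a div 2^m, b div 2^m)
      * kron_r_pows bs $$ (a mod 2^m, b mod 2^m)"
    using ab r_pow_carrier[of x] kron_r_pows_carrier[of bs]
    by (simp add: kron_r_pows_def index_kron_mat m_def)
  also have "\<dots> = (if (bit a m \<noteq> bit b m) = x then 1 else 0) *
      (if \<forall>k<m. (bit a (m - 1 - k) \<noteq> bit b (m - 1 - k)) = bs ! k then 1 else 0)"
    using ab low_bits
    by (simp add: index_r_pow div_two_power_eq_bit Cons.IH m_def cong: conj_cong)
  also have "\<dots> = (if \<forall>k<length (x # bs). (bit a (length (x # bs) - 1 - k)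
      \<noteq> bit b (length (x # bs) - 1 - k)) = (x # bs) ! k then 1 else 0)"
    by (auto simp: m_def less_Suc_eq_0_disj)
  finally show ?case .
qed

text \<open>The coordinate vector \<open>(x\<^sub>1, \<dots>, x\<^sub>t)\<close> read off from the binary digits of \<open>a\<close>,
  most significant digit first.\<close>
definition binary_digits :: "nat \<Rightarrow> nat \<Rightarrow> nat \<Rightarrow> bool" where
  "binary_digits t a k \<longleftrightarrow> k < t \<and> bit a (t - 1 - k)"

lemma binary_digits_in_Z2_pow: "binary_digits t a \<in> Z2_pow t"
  by (simp add: binary_digits_def Z2_pow_def)

lemma inj_on_binary_digits: "inj_on (binary_digits t) {..<2^t}"
proof (rule inj_onI)
  fix a b assume ab: "a \<in> {..<2^t}" "b \<in> {..<2^t}" and eq: "binary_digits t a = binary_digits t b"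
  show "a = b"
  proof (rule bit_eqI)
    fix k
    show "bit a k = bit b k"
    proof (cases "k < t")
      case True
      thus ?thesis using fun_cong[OF eq, of "t - 1 - k"] by (simp add: binary_digits_def)
    next
      case False
      thus ?thesis using ab by (metis bit_take_bit_iff lessThan_iff take_bit_nat_eq_self_iff)
    qed
  qed
qed

lemma phi_index:
  assumes "\<iota> x \<in> Z2_pow t" "a < 2^t" "b < 2^t"
  shows "phi t \<iota> x $$ (a, b) =
    (if (\<lambda>k. binary_digits t a k \<noteq> binary_digits t b k) = \<iota> x then 1 else 0)"
proof -
  have "(\<forall>k<t. (bit a (t - 1 - k) \<noteq> bit b (t - 1 - k)) = \<iota> x k)
      \<longleftrightarrow> (\<lambda>k. binary_digits t a k \<noteq> binary_digits t b k) = \<iota> x"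
  proof -
    have "(binary_digits t a k \<noteq> binary_digits t b k) = \<iota> x k
        \<longleftrightarrow> (k < t \<longrightarrow> (bit a (t - 1 - k) \<noteq> bit b (t - 1 - k)) = \<iota> x k)" for k
      using assms(1) by (cases "k < t") (auto simp: binary_digits_def Z2_pow_def)
    thus ?thesis by (auto simp: fun_eq_iff)
  qed
  thus ?thesis using assms(2,3) by (simp add: phi_eq_kron_r_pows index_kron_r_pows)
qed

text \<open>The numbering \<open>\<delta>\<close> of rows and columns by field elements: \<open>\<delta>\<^sub>a\<close> has the binary
  digits of \<open>a\<close> as coordinate vector.\<close>
definition index_elem :: "nat \<Rightarrow> ('a \<Rightarrow> nat \<Rightarrow> bool) \<Rightarrow> nat \<Rightarrow> 'a" where
  "index_elem t \<iota> a = inv_into UNIV \<iota> (binary_digits t a)"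

lemma additive_iso_Z2_add_self:
  fixes \<iota> :: "'a::ab_group_add \<Rightarrow> nat \<Rightarrow> bool" and x :: 'a
  assumes "additive_iso_Z2 t \<iota>"
  shows "x + x = 0"
proof -
  have inj: "inj \<iota>" and add: "\<And>x y. \<iota> (x + y) = (\<lambda>k. \<iota> x k \<noteq> \<iota> y k)"
    using assms by (auto simp: additive_iso_Z2_def bij_betw_def)
  have "\<iota> (x + x) = \<iota> 0" using add[of x x] add[of 0 0] by simp
  thus ?thesis using inj by (simp add: inj_eq)
qed

lemma additive_iso_Z2_index_elem:
  assumes "additive_iso_Z2 t \<iota>"
  shows "\<iota> (index_elem t \<iota> a) = binary_digits t a"
  using assms binary_digits_in_Z2_pow[of t a]
  by (auto simp: additive_iso_Z2_def bij_betw_def index_elem_def intro: f_inv_into_f)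

lemma bij_betw_index_elem:
  fixes \<iota> :: "'a::{ab_group_add, finite} \<Rightarrow> nat \<Rightarrow> bool"
  assumes "additive_iso_Z2 t \<iota>" "card (UNIV :: 'a set) = 2^t"
  shows "bij_betw (index_elem t \<iota>) {..<2^t} UNIV"
proof -
  have inj: "inj_on (index_elem t \<iota>) {..<2^t}"
    using inj_on_binary_digits additive_iso_Z2_index_elem[OF assms(1)]
    by (metis inj_on_def)
  hence "index_elem t \<iota> ` {..<2^t} = UNIV"
    using assms(2) by (intro card_subset_eq) (auto simp: card_image)
  thus ?thesis using inj by (simp add: bij_betw_def)
qed

lemma phi_index_elem:
  assumes "additive_iso_Z2 t \<iota>" "a < 2^t" "b < 2^t"
  shows "phi t \<iota> x $$ (a, b) = (if index_elem t \<iota> a + index_elem t \<iota> b = x then 1 else 0)"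
proof -
  have "inj \<iota>" "\<iota> x \<in> Z2_pow t"
    using assms(1) by (auto simp: additive_iso_Z2_def bij_betw_def)
  moreover have "\<iota> (index_elem t \<iota> a + index_elem t \<iota> b) = (\<lambda>k. binary_digits t a k \<noteq> binary_digits t b k)"
    using assms(1) by (simp add: additive_iso_Z2_def additive_iso_Z2_index_elem)
  ultimately show ?thesis
    using assms(2,3) by (auto simp: phi_index dest: injD)
qed

lemma W_blk_index:
  assumes "additive_iso_Z2 t \<iota>" "k < 2^t" "a < 2^t" "l < 2^t" "c < 2^t"
  shows "W_blk t \<iota> \<alpha> W i $$ (k * 2^t + a, l * 2^t + c) =
    W $$ (k, l) * (if index_elem t \<iota> a + index_elem t \<iota> c = \<alpha> i * \<alpha> l then 1 else 0)"
  using assms block_index_less[of k "2^t" a] block_index_less[of l "2^t" c]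
  by (simp add: W_blk_def phi_index_elem)

lemma sum_indicator_product_char2:
  fixes d d' u v :: "'a::{ab_group_add, finite}"
  assumes char2: "\<And>x::'a. x + x = 0"
  shows "(\<Sum>y\<in>UNIV. (if d + y = u then 1 else 0) * (if d' + y = v then 1 else 0 :: real))
    = (if d + d' = u + v then 1 else 0)"
proof -
  have eq_swap: "x + y = z \<longleftrightarrow> y = z + x" for x y z :: 'a
    using char2[of x] by (metis add.assoc add.commute add.left_neutral)
  have "(\<Sum>y\<in>UNIV. (if d + y = u then 1 else 0) * (if d' + y = v then 1 else 0 :: real))
      = (\<Sum>y\<in>UNIV. if y = u + d then (if d' + y = v then 1 else 0) else 0)"
    by (intro sum.cong refl) (simp add: eq_swap[of d])
  also have "\<dots> = (if d' + (u + d) = v then 1 else 0)"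
    by simp
  also have "\<dots> = (if d + d' = u + v then 1 else 0)"
  proof -
    have "d' + (u + d) = u + (d + d')" by (simp add: ac_simps)
    thus ?thesis by (simp only: eq_swap[of u "d + d'" v] add.commute[of v u])
  qed
  finally show ?thesis .
qed

text \<open>The unique \<open>l\<close> with \<open>(\<alpha>\<^sub>i + \<alpha>\<^sub>j) \<alpha>\<^sub>l = \<delta>\<^sub>a + \<delta>\<^sub>b\<close>, where \<open>\<delta> = index_elem t \<iota>\<close>:
  the only block column of \<open>W\<^sub>i\<close> and \<open>W\<^sub>j\<close> contributing to entry \<open>(a, b)\<close> of every
  block of \<open>W\<^sub>i W\<^sub>j\<^sup>T\<close>.\<close>
definition latin_index :: "nat \<Rightarrow> ('a::field \<Rightarrow> nat \<Rightarrow> bool) \<Rightarrow> (nat \<Rightarrow> 'a) \<Rightarrow> nat \<Rightarrow> nat \<Rightarrow> nat \<Rightarrow> nat \<Rightarrow> nat"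
  where "latin_index t \<iota> \<alpha> i j a b =
    inv_into {..<2^t} \<alpha> ((index_elem t \<iota> a + index_elem t \<iota> b) / (\<alpha> i + \<alpha> j))"

lemma bij_betw_latin_index_row:
  fixes \<iota> :: "'a::{field, finite} \<Rightarrow> nat \<Rightarrow> bool"
  assumes "additive_iso_Z2 t \<iota>" "card (UNIV :: 'a set) = 2^t"
    and "bij_betw \<alpha> {..<2^t} UNIV" "\<alpha> i + \<alpha> j \<noteq> 0"
  shows "bij_betw (latin_index t \<iota> \<alpha> i j a) {..<2^t} {..<2^t}"
proof -
  have "bij_betw (\<lambda>y. (index_elem t \<iota> a + y) / (\<alpha> i + \<alpha> j)) UNIV UNIV"
    using assms(4) by (intro bij_betwI[where g = "\<lambda>z. z * (\<alpha> i + \<alpha> j) - index_elem t \<iota> a"]) auto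
  from bij_betw_trans[OF bij_betw_trans[OF bij_betw_index_elem[OF assms(1,2)] this]
      bij_betw_inv_into[OF assms(3)]]
  show ?thesis unfolding latin_index_def by (simp add: comp_def)
qed

lemma latin_index_iff:
  assumes "bij_betw \<alpha> {..<2^t} UNIV" "\<alpha> i + \<alpha> j \<noteq> 0" "l < 2^t"
  shows "latin_index t \<iota> \<alpha> i j a b = l \<longleftrightarrow>
    index_elem t \<iota> a + index_elem t \<iota> b = \<alpha> i * \<alpha> l + \<alpha> j * \<alpha> l"
proof -
  have "latin_index t \<iota> \<alpha> i j a b = l \<longleftrightarrow>
      \<alpha> l = (index_elem t \<iota> a + index_elem t \<iota> b) / (\<alpha> i + \<alpha> j)"
    using assms(1,3) unfolding latin_index_def
    by (metis bij_betw_imp_surj_on bij_betw_inv_into_left f_inv_into_f lessThan_iff UNIV_I)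
  thus ?thesis using assms(2) by (auto simp: field_simps)
qed

lemma W_blk_mult_transpose_index:
  fixes \<iota> :: "'a::{field, finite} \<Rightarrow> nat \<Rightarrow> bool"
  assumes iso: "additive_iso_Z2 t \<iota>" and card: "card (UNIV :: 'a set) = 2^t"
    and \<alpha>: "bij_betw \<alpha> {..<2^t} UNIV" and e: "\<alpha> i + \<alpha> j \<noteq> 0"
    and kamb: "k < 2^t" "a < 2^t" "m < 2^t" "b < 2^t"
  shows "(W_blk t \<iota> \<alpha> W i * transpose_mat (W_blk t \<iota> \<alpha> W j)) $$ (k * 2^t + a, m * 2^t + b)
    = W $$ (k, latin_index t \<iota> \<alpha> i j a b) * W $$ (m, latin_index t \<iota> \<alpha> i j a b)"
proof -
  let ?n = "2^t :: nat" and ?\<delta> = "index_elem t \<iota>" and ?L = "latin_index t \<iota> \<alpha> i j a b"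
  have indicator_sum: "(\<Sum>c<?n. (if ?\<delta> a + ?\<delta> c = u then 1 else 0) *
      (if ?\<delta> b + ?\<delta> c = v then 1 else 0 :: real)) = (if ?\<delta> a + ?\<delta> b = u + v then 1 else 0)" for u v
    using sum.reindex_bij_betw[OF bij_betw_index_elem[OF iso card],
        of "\<lambda>y. (if ?\<delta> a + y = u then 1 else 0) * (if ?\<delta> b + y = v then 1 else 0 :: real)"]
    by (simp add: sum_indicator_product_char2 additive_iso_Z2_add_self[OF iso])
  have "(W_blk t \<iota> \<alpha> W i * transpose_mat (W_blk t \<iota> \<alpha> W j)) $$ (k * ?n + a, m * ?n + b)
      = (\<Sum>l<?n. \<Sum>c<?n. W_blk t \<iota> \<alpha> W i $$ (k * ?n + a, l * ?n + c)
          * W_blk t \<iota> \<alpha> W j $$ (m * ?n + b, l * ?n + c))"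
    using kamb block_index_less by (intro index_mult_transpose_block) (auto simp: W_blk_def)
  also have "\<dots> = (\<Sum>l<?n. W $$ (k, l) * W $$ (m, l) * (\<Sum>c<?n.
      (if ?\<delta> a + ?\<delta> c = \<alpha> i * \<alpha> l then 1 else 0) * (if ?\<delta> b + ?\<delta> c = \<alpha> j * \<alpha> l then 1 else 0)))"
    using kamb by (intro sum.cong refl) (simp add: W_blk_index[OF iso] sum_distrib_left mult_ac)
  also have "\<dots> = (\<Sum>l<?n. if l = ?L then W $$ (k, l) * W $$ (m, l) else 0)"
  proof (intro sum.cong refl)
    fix l assume "l \<in> {..<?n}"
    hence "?\<delta> a + ?\<delta> b = \<alpha> i * \<alpha> l + \<alpha> j * \<alpha> l \<longleftrightarrow> l = ?L"
      using latin_index_iff[OF \<alpha> e, of l \<iota> a b] by auto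
    thus "W $$ (k, l) * W $$ (m, l) * (\<Sum>c<?n. (if ?\<delta> a + ?\<delta> c = \<alpha> i * \<alpha> l then 1 else 0)
        * (if ?\<delta> b + ?\<delta> c = \<alpha> j * \<alpha> l then 1 else 0))
        = (if l = ?L then W $$ (k, l) * W $$ (m, l) else 0)"
      by (simp only: indicator_sum) simp
  qed
  also have "\<dots> = W $$ (k, ?L) * W $$ (m, ?L)"
    using bij_betw_apply[OF bij_betw_latin_index_row[OF iso card \<alpha> e, of a], of b] kamb by simp
  finally show ?thesis .
qed

theorem proposition5p1:
  fixes t :: nat
    and \<iota> :: "'a::{field, finite} \<Rightarrow> nat \<Rightarrow> bool"
    and \<alpha> :: "nat \<Rightarrow> 'a"
    and W :: "real mat"
    and i j :: nat
  assumes "t > 0"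
    and "card (UNIV :: 'a set) = 2 ^ t"
    and "additive_iso_Z2 t \<iota>"
    and "bij_betw \<alpha> {0..<2 ^ t} (UNIV :: 'a set)"
    and "hadamard (2 ^ t) W"
    and "i < 2 ^ t" and "j < 2 ^ t" and "i \<noteq> j"
  shows "bush_type (2 ^ t) (W_blk t \<iota> \<alpha> W i * transpose_mat (W_blk t \<iota> \<alpha> W j))"
proof -
  have \<alpha>: "bij_betw \<alpha> {..<2^t} UNIV" using assms(4) by (simp add: atLeast0LessThan)
  have "\<alpha> i \<noteq> \<alpha> j" using \<alpha> assms(6-8) by (auto simp: bij_betw_def inj_on_def)
  hence e: "\<alpha> i + \<alpha> j \<noteq> 0"
    using additive_iso_Z2_add_self[OF assms(3), of "\<alpha> j"] by (metis add_right_cancel)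
  interpret latin_hadamard_block_matrix "2^t" W "W_blk t \<iota> \<alpha> W i * transpose_mat (W_blk t \<iota> \<alpha> W j)"
    "latin_index t \<iota> \<alpha> i j"
  proof
    show "bij_betw (latin_index t \<iota> \<alpha> i j a) {..<2^t} {..<2^t}" for a
      by (rule bij_betw_latin_index_row[OF assms(3,2) \<alpha> e])
    show "latin_index t \<iota> \<alpha> i j a b = latin_index t \<iota> \<alpha> i j b a" for a b
      by (simp add: latin_index_def add.commute)
    show "W_blk t \<iota> \<alpha> W i * transpose_mat (W_blk t \<iota> \<alpha> W j) \<in> carrier_mat (2^t * 2^t) (2^t * 2^t)"
      by (auto simp: W_blk_def intro!: mult_carrier_mat)
    show "(W_blk t \<iota> \<alpha> W i * transpose_mat (W_blk t \<iota> \<alpha> W j)) $$ (k * 2^t + a, m * 2^t + b)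
        = W $$ (k, latin_index t \<iota> \<alpha> i j a b) * W $$ (m, latin_index t \<iota> \<alpha> i j a b)"
      if "k < 2^t" "m < 2^t" "a < 2^t" "b < 2^t" for k m a b
      using that by (intro W_blk_mult_transpose_index[OF assms(3,2) \<alpha> e])
  qed (rule assms(5))
  show ?thesis by (rule bush_type_H)
qed

end
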